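(* Let $(\mathfrak g,[\cdot,\cdot],\alpha,\varepsilon)$ be a color Hom-Lie algebra and $\rho$ a representation of $\mathfrak g$ on $(M,\beta)$. Let $\delta^1:\mathscr C^1(\mathfrak g,M)\to\mathscr C^2(\mathfrak g,M)$ and $\delta^2:\mathscr C^2(\mathfrak g,M)\to\mathscr C^3(\mathfrak g,M)$ be defined, for homogeneous $\varphi$ and homogeneous $x_0,x_1,x_2\in\mathfrak g$, by $\delta^1\varphi(x_0,x_1)=\varepsilon(\varphi,x_0)\rho(x_0)(\varphi(x_1))-\varepsilon(\varphi+x_0,x_1)\rho(x_1)(\varphi(x_0))-\varphi([x_0,x_1])$, $\delta^2\varphi(x_0,x_1,x_2)=\varepsilon(\varphi,x_0)\rho(\alpha(x_0))(\varphi(x_1,x_2))-\varepsilon(\varphi+x_0,x_1)\rho(\alpha(x_1))(\varphi(x_0,x_2))+\varepsilon(\varphi+x_0+x_1,x_2)\rho(\alpha(x_2))(\varphi(x_0,x_1))-\varphi([x_0,x_1],\alpha(x_2))+\varepsilon(x_1,x_2)\varphi([x_0,x_2],\alpha(x_1))+\varphi(\alpha(x_0),[x_1,x_2])$. Then $\delta^2\circ\delta^1=0$.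
   Context: $\mathbb K$ is a field of characteristic zero and $\Gamma$ an abelian group. A bicharacter is a map $\varepsilon:\Gamma\times\Gamma\to\mathbb K\setminus\{0\}$ with $\varepsilon(a,b)\varepsilon(b,a)=1$, $\varepsilon(a,b+c)=\varepsilon(a,b)\varepsilon(a,c)$, $\varepsilon(a+b,c)=\varepsilon(a,c)\varepsilon(b,c)$; for homogeneous objects $\varepsilon(x,y)=\varepsilon(\deg x,\deg y)$. A color Hom-Lie algebra $(\mathfrak g,[\cdot,\cdot],\alpha,\varepsilon)$: $\Gamma$-graded space, even bilinear bracket, even linear $\alpha$, with $[x,y]=-\varepsilon(x,y)[y,x]$ and $\varepsilon(z,x)[\alpha(x),[y,z]]+\varepsilon(x,y)[\alpha(y),[z,x]]+\varepsilon(y,z)[\alpha(z),[x,y]]=0$. A representation of $\mathfrak g$ on $(M,\beta)$ ($M$ $\Gamma$-graded, $\beta:M\to M$ even linear) is an even linear $\rho:\mathfrak g\to\mathfrak{gl}(M)$ with $\rho([x,y])\circ\beta=\rho(\alpha(x))\circ\rho(y)-\varepsilon(x,y)\rho(\alpha(y))\circ\rho(x)$. For $n\ge1$, $\mathscr C^n(\mathfrak g,M)$ is the graded space of $\varepsilon$-alternating multilinear maps $\varphi:\wedge^n\mathfrak g\to M$ (sums of homogeneous ones) satisfying $\varphi\circ\alpha^{\otimes n}=\beta\circ\varphi$. *)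

theory Defs
  imports Main "HOL.Vector_Spaces"
begin

text \<open>The space is the direct sum of the G gamma: every vector has a unique decomposition
  into finitely many nonzero homogeneous components.\<close>

definition graded :: "('k::field \<Rightarrow> 'v::ab_group_add \<Rightarrow> 'v) \<Rightarrow> ('g \<Rightarrow> 'v set) \<Rightarrow> bool" where
  "graded sc G \<longleftrightarrow> vector_space sc \<and> (\<forall>\<gamma>. 0 \<in> G \<gamma> \<and> (\<forall>x\<in>G \<gamma>. \<forall>y\<in>G \<gamma>. x + y \<in> G \<gamma>) \<and>
        (\<forall>c. \<forall>x\<in>G \<gamma>. sc c x \<in> G \<gamma>)) \<and>
     (\<forall>x. \<exists>!c. finite {\<gamma>. c \<gamma> \<noteq> 0} \<and> (\<forall>\<gamma>. c \<gamma> \<in> G \<gamma>) \<and> x = (\<Sum>\<gamma>\<in>{\<gamma>. c \<gamma> \<noteq> 0}. c \<gamma>))"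

definition comp :: "('g \<Rightarrow> 'v::ab_group_add set) \<Rightarrow> 'g \<Rightarrow> 'v \<Rightarrow> 'v" where
  "comp G \<gamma> x = (THE c. finite {\<gamma>. c \<gamma> \<noteq> 0} \<and> (\<forall>\<gamma>. c \<gamma> \<in> G \<gamma>) \<and> x = (\<Sum>\<gamma>\<in>{\<gamma>. c \<gamma> \<noteq> 0}. c \<gamma>)) \<gamma>"

definition supp :: "('g \<Rightarrow> 'v::ab_group_add set) \<Rightarrow> 'v \<Rightarrow> 'g set" where
  "supp G x = {\<gamma>. comp G \<gamma> x \<noteq> 0}"

definition bicharacter :: "('g::ab_group_add \<Rightarrow> 'g \<Rightarrow> 'k::field) \<Rightarrow> bool" where
  "bicharacter eps \<longleftrightarrow> (\<forall>a b c. eps a b \<noteq> 0 \<and> eps a b * eps b a = 1 \<and>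
     eps a (b + c) = eps a b * eps a c \<and> eps (a + b) c = eps a c * eps b c)"

definition even_linear ::
  "('k::field \<Rightarrow> 'v::ab_group_add \<Rightarrow> 'v) \<Rightarrow> ('k \<Rightarrow> 'w::ab_group_add \<Rightarrow> 'w) \<Rightarrow>
   ('g \<Rightarrow> 'v set) \<Rightarrow> ('g \<Rightarrow> 'w set) \<Rightarrow> ('v \<Rightarrow> 'w) \<Rightarrow> bool" where
  "even_linear s1 s2 G1 G2 f \<longleftrightarrow> Vector_Spaces.linear s1 s2 f \<and> (\<forall>\<gamma> x. x \<in> G1 \<gamma> \<longrightarrow> f x \<in> G2 \<gamma>)"

definition even_bilinear ::
  "('k::field \<Rightarrow> 'v::ab_group_add \<Rightarrow> 'v) \<Rightarrow> ('g::ab_group_add \<Rightarrow> 'v set) \<Rightarrow> ('v \<Rightarrow> 'v \<Rightarrow> 'v) \<Rightarrow> bool" where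
  "even_bilinear sc G br \<longleftrightarrow> (\<forall>x. Vector_Spaces.linear sc sc (br x)) \<and>
     (\<forall>y. Vector_Spaces.linear sc sc (\<lambda>x. br x y)) \<and>
     (\<forall>a b x y. x \<in> G a \<longrightarrow> y \<in> G b \<longrightarrow> br x y \<in> G (a + b))"

text \<open>Color Hom-Lie algebra (g, [.,.], alpha, eps); the identities are imposed on
  homogeneous elements (x in G a means x homogeneous of degree a).\<close>

definition color_hom_lie ::
  "('k::field \<Rightarrow> 'v::ab_group_add \<Rightarrow> 'v) \<Rightarrow> ('g::ab_group_add \<Rightarrow> 'v set) \<Rightarrow> ('v \<Rightarrow> 'v \<Rightarrow> 'v) \<Rightarrow>
   ('v \<Rightarrow> 'v) \<Rightarrow> ('g \<Rightarrow> 'g \<Rightarrow> 'k) \<Rightarrow> bool" where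
  "color_hom_lie sc G br \<alpha> eps \<longleftrightarrow> graded sc G \<and> bicharacter eps \<and> even_bilinear sc G br \<and>
     even_linear sc sc G G \<alpha> \<and>
     (\<forall>a b x y. x \<in> G a \<longrightarrow> y \<in> G b \<longrightarrow> br x y = - sc (eps a b) (br y x)) \<and>
     (\<forall>a b c x y z. x \<in> G a \<longrightarrow> y \<in> G b \<longrightarrow> z \<in> G c \<longrightarrow>
        sc (eps c a) (br (\<alpha> x) (br y z)) + sc (eps a b) (br (\<alpha> y) (br z x))
        + sc (eps b c) (br (\<alpha> z) (br x y)) = 0)"

definition representation ::
  "('k::field \<Rightarrow> 'v::ab_group_add \<Rightarrow> 'v) \<Rightarrow> ('g::ab_group_add \<Rightarrow> 'v set) \<Rightarrow> ('v \<Rightarrow> 'v \<Rightarrow> 'v) \<Rightarrow>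
   ('v \<Rightarrow> 'v) \<Rightarrow> ('g \<Rightarrow> 'g \<Rightarrow> 'k) \<Rightarrow>
   ('k \<Rightarrow> 'm::ab_group_add \<Rightarrow> 'm) \<Rightarrow> ('g \<Rightarrow> 'm set) \<Rightarrow> ('m \<Rightarrow> 'm) \<Rightarrow> ('v \<Rightarrow> 'm \<Rightarrow> 'm) \<Rightarrow> bool" where
  "representation sc G br \<alpha> eps sm GM \<beta> \<rho> \<longleftrightarrow> graded sm GM \<and> even_linear sm sm GM GM \<beta> \<and>
     (\<forall>m. Vector_Spaces.linear sc sm (\<lambda>x. \<rho> x m)) \<and>
     (\<forall>x. Vector_Spaces.linear sm sm (\<rho> x)) \<and>
     (\<forall>a b x m. x \<in> G a \<longrightarrow> m \<in> GM b \<longrightarrow> \<rho> x m \<in> GM (a + b)) \<and>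
     (\<forall>a b x y m. x \<in> G a \<longrightarrow> y \<in> G b \<longrightarrow>
        \<rho> (br x y) (\<beta> m) = \<rho> (\<alpha> x) (\<rho> y m) - sm (eps a b) (\<rho> (\<alpha> y) (\<rho> x m)))"

text \<open>phi is a homogeneous element of degree d of C^1(g, M): a linear map g -> M
  (eps-alternation is vacuous for n = 1) with phi o alpha = beta o phi, mapping
  G a into GM (d + a).\<close>

definition cochain1_hom ::
  "('k::field \<Rightarrow> 'v::ab_group_add \<Rightarrow> 'v) \<Rightarrow> ('g::ab_group_add \<Rightarrow> 'v set) \<Rightarrow> ('v \<Rightarrow> 'v) \<Rightarrow>
   ('k \<Rightarrow> 'm::ab_group_add \<Rightarrow> 'm) \<Rightarrow> ('g \<Rightarrow> 'm set) \<Rightarrow> ('m \<Rightarrow> 'm) \<Rightarrow> ('v \<Rightarrow> 'm) \<Rightarrow> 'g \<Rightarrow> bool" where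
  "cochain1_hom sc G \<alpha> sm GM \<beta> \<phi> d \<longleftrightarrow> Vector_Spaces.linear sc sm \<phi> \<and>
     (\<forall>x. \<phi> (\<alpha> x) = \<beta> (\<phi> x)) \<and> (\<forall>a x. x \<in> G a \<longrightarrow> \<phi> x \<in> GM (d + a))"

text \<open>delta^1 of a homogeneous phi of degree d, given on homogeneous arguments by the
  paper's formula and extended multilinearly via the homogeneous decomposition.\<close>

definition delta1 ::
  "('g::ab_group_add \<Rightarrow> 'v::ab_group_add set) \<Rightarrow> ('v \<Rightarrow> 'v \<Rightarrow> 'v) \<Rightarrow> ('g \<Rightarrow> 'g \<Rightarrow> 'k::field) \<Rightarrow>
   ('k \<Rightarrow> 'm::ab_group_add \<Rightarrow> 'm) \<Rightarrow> ('v \<Rightarrow> 'm \<Rightarrow> 'm) \<Rightarrow> ('v \<Rightarrow> 'm) \<Rightarrow> 'g \<Rightarrow> 'v \<Rightarrow> 'v \<Rightarrow> 'm" where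
  "delta1 G br eps sm \<rho> \<phi> d x0 x1 =
     (\<Sum>a0\<in>supp G x0. \<Sum>a1\<in>supp G x1.
        let y0 = comp G a0 x0; y1 = comp G a1 x1 in
        sm (eps d a0) (\<rho> y0 (\<phi> y1)) - sm (eps (d + a0) a1) (\<rho> y1 (\<phi> y0)) - \<phi> (br y0 y1))"

definition delta2 ::
  "('g::ab_group_add \<Rightarrow> 'v::ab_group_add set) \<Rightarrow> ('v \<Rightarrow> 'v \<Rightarrow> 'v) \<Rightarrow> ('v \<Rightarrow> 'v) \<Rightarrow> ('g \<Rightarrow> 'g \<Rightarrow> 'k::field) \<Rightarrow>
   ('k \<Rightarrow> 'm::ab_group_add \<Rightarrow> 'm) \<Rightarrow> ('v \<Rightarrow> 'm \<Rightarrow> 'm) \<Rightarrow> ('v \<Rightarrow> 'v \<Rightarrow> 'm) \<Rightarrow> 'g \<Rightarrow>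
   'v \<Rightarrow> 'v \<Rightarrow> 'v \<Rightarrow> 'm" where
  "delta2 G br \<alpha> eps sm \<rho> \<psi> e x0 x1 x2 =
     (\<Sum>a0\<in>supp G x0. \<Sum>a1\<in>supp G x1. \<Sum>a2\<in>supp G x2.
        let y0 = comp G a0 x0; y1 = comp G a1 x1; y2 = comp G a2 x2 in
        sm (eps e a0) (\<rho> (\<alpha> y0) (\<psi> y1 y2))
        - sm (eps (e + a0) a1) (\<rho> (\<alpha> y1) (\<psi> y0 y2))
        + sm (eps (e + a0 + a1) a2) (\<rho> (\<alpha> y2) (\<psi> y0 y1))
        - \<psi> (br y0 y1) (\<alpha> y2)
        + sm (eps a1 a2) (\<psi> (br y0 y2) (\<alpha> y1))
        + \<psi> (\<alpha> y0) (br y1 y2))"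

end

theory Submission
  imports Defs
begin

text \<open>On homogeneous arguments \<open>\<delta>\<^sup>2(\<delta>\<^sup>1\<phi>)\<close> expands into a sum of terms
  \<open>\<rho>(\<alpha>(-))\<rho>(-)\<phi>(-)\<close>, \<open>\<rho>([-,-])\<phi>(\<alpha>(-))\<close>, \<open>\<rho>(\<alpha>(-))\<phi>([-,-])\<close> and
  \<open>\<phi>([[-,-],\<alpha>(-)])\<close>. The terms of the third kind cancel in pairs; since
  \<open>\<phi> \<circ> \<alpha> = \<beta> \<circ> \<phi>\<close>, the representation identity rewrites those of the second
  kind into terms of the first kind, which then cancel; and the remaining three terms
  are \<open>\<phi>\<close> applied to the color Hom-Jacobi identity. By construction both coboundaries
  are extended multilinearly from homogeneous arguments, so the general case is a sum of
  homogeneous ones.\<close>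

lemma graded_unique_decomposition:
  assumes "graded sc G"
  shows "\<exists>!c. finite {\<gamma>. c \<gamma> \<noteq> 0} \<and> (\<forall>\<gamma>. c \<gamma> \<in> G \<gamma>) \<and> x = (\<Sum>\<gamma>\<in>{\<gamma>. c \<gamma> \<noteq> 0}. c \<gamma>)"
  using assms unfolding graded_def by blast

lemma comp_in_grade:
  assumes "graded sc G"
  shows "comp G \<gamma> x \<in> G \<gamma>"
  using theI'[OF graded_unique_decomposition[OF assms, of x]] unfolding comp_def by blast

lemma comp_homogeneous:
  assumes gr: "graded sc G" and y: "y \<in> G a"
  shows "comp G \<gamma> y = (if \<gamma> = a then y else 0)"
proof -
  define c where "c = (\<lambda>\<gamma>. if \<gamma> = a then y else 0)"
  have zero: "\<And>\<gamma>. 0 \<in> G \<gamma>" using gr unfolding graded_def by blast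
  have "{\<gamma>. c \<gamma> \<noteq> 0} = (if y = 0 then {} else {a})" unfolding c_def by auto
  then have "finite {\<gamma>. c \<gamma> \<noteq> 0} \<and> (\<forall>\<gamma>. c \<gamma> \<in> G \<gamma>) \<and> y = (\<Sum>\<gamma>\<in>{\<gamma>. c \<gamma> \<noteq> 0}. c \<gamma>)"
    using y zero by (auto simp: c_def)
  then have "(THE c. finite {\<gamma>. c \<gamma> \<noteq> 0} \<and> (\<forall>\<gamma>. c \<gamma> \<in> G \<gamma>) \<and> y = (\<Sum>\<gamma>\<in>{\<gamma>. c \<gamma> \<noteq> 0}. c \<gamma>)) = c"
    by (rule the1_equality[OF graded_unique_decomposition[OF gr]])
  then show ?thesis unfolding comp_def c_def by simp
qed

lemma supp_homogeneous:
  assumes "graded sc G" and "y \<in> G a"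
  shows "supp G y = (if y = 0 then {} else {a})"
  unfolding supp_def comp_homogeneous[OF assms] by auto

lemma bicharacter_add_left: "bicharacter eps \<Longrightarrow> eps (a + b) c = eps a c * eps b c"
  and bicharacter_add_right: "bicharacter eps \<Longrightarrow> eps a (b + c) = eps a b * eps a c"
  and bicharacter_swap: "bicharacter eps \<Longrightarrow> eps a b * eps b a = 1"
  unfolding bicharacter_def by blast+

locale color_hom_lie_module =
  fixes sc :: "'k::field \<Rightarrow> 'v::ab_group_add \<Rightarrow> 'v"
    and G :: "'g::ab_group_add \<Rightarrow> 'v set"
    and br :: "'v \<Rightarrow> 'v \<Rightarrow> 'v" and \<alpha> :: "'v \<Rightarrow> 'v"
    and eps :: "'g \<Rightarrow> 'g \<Rightarrow> 'k"
    and sm :: "'k \<Rightarrow> 'm::ab_group_add \<Rightarrow> 'm" and GM :: "'g \<Rightarrow> 'm set"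
    and \<beta> :: "'m \<Rightarrow> 'm" and \<rho> :: "'v \<Rightarrow> 'm \<Rightarrow> 'm"
  assumes color_hom_lie: "color_hom_lie sc G br \<alpha> eps"
    and representation: "representation sc G br \<alpha> eps sm GM \<beta> \<rho>"
begin

lemma graded: "graded sc G"
  and bicharacter: "bicharacter eps"
  and bracket_even_bilinear: "even_bilinear sc G br"
  and alpha_even_linear: "even_linear sc sc G G \<alpha>"
  using color_hom_lie unfolding color_hom_lie_def by simp_all

lemma bracket_antisym: "x \<in> G a \<Longrightarrow> y \<in> G b \<Longrightarrow> br x y = - sc (eps a b) (br y x)"
  using color_hom_lie unfolding color_hom_lie_def by blast

lemma hom_jacobi: "x \<in> G a \<Longrightarrow> y \<in> G b \<Longrightarrow> z \<in> G c \<Longrightarrow>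
    sc (eps c a) (br (\<alpha> x) (br y z)) + sc (eps a b) (br (\<alpha> y) (br z x))
    + sc (eps b c) (br (\<alpha> z) (br x y)) = 0"
  using color_hom_lie unfolding color_hom_lie_def by blast

lemma bracket_grade: "x \<in> G a \<Longrightarrow> y \<in> G b \<Longrightarrow> br x y \<in> G (a + b)"
  and bracket_right_hom: "module_hom sc sc (br u)"
  and bracket_left_hom: "module_hom sc sc (\<lambda>x. br x v)"
  using bracket_even_bilinear unfolding even_bilinear_def linear_iff_module_hom by blast+

lemma alpha_grade: "x \<in> G a \<Longrightarrow> \<alpha> x \<in> G a"
  using alpha_even_linear unfolding even_linear_def by blast

lemma module_sm: "module sm"
  using representation unfolding representation_def graded_def module_iff_vector_space by blast

lemma rho_bracket: "x \<in> G a \<Longrightarrow> y \<in> G b \<Longrightarrow>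
    \<rho> (br x y) (\<beta> m) = \<rho> (\<alpha> x) (\<rho> y m) - sm (eps a b) (\<rho> (\<alpha> y) (\<rho> x m))"
  using representation unfolding representation_def by blast

lemma rho_right_hom: "module_hom sm sm (\<rho> x)"
  and rho_left_hom: "module_hom sc sm (\<lambda>x. \<rho> x m)"
  using representation unfolding representation_def linear_iff_module_hom by blast+

lemma eps_swap_mult: "eps a b * (eps b a * k) = k"
  by (simp add: mult.assoc[symmetric] bicharacter_swap[OF bicharacter])

lemmas eps_simps = bicharacter_add_left[OF bicharacter] bicharacter_add_right[OF bicharacter]
  bicharacter_swap[OF bicharacter] eps_swap_mult

lemmas rho_simps = module_hom.add[OF rho_right_hom] module_hom.diff[OF rho_right_hom]
  module_hom.scale[OF rho_right_hom]

lemma phi_hom_jacobi: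
  assumes phi: "module_hom sc sm \<phi>"
    and x: "x \<in> G a" and y: "y \<in> G b" and z: "z \<in> G c"
  shows "\<phi> (br (br x y) (\<alpha> z)) = sm (eps b c) (\<phi> (br (br x z) (\<alpha> y))) + \<phi> (br (\<alpha> x) (br y z))"
proof -
  interpret M: module sm by (rule module_sm)
  let ?J1 = "\<phi> (br (\<alpha> x) (br y z))" and ?J2 = "\<phi> (br (\<alpha> y) (br z x))"
    and ?J3 = "\<phi> (br (\<alpha> z) (br x y))"
  note phi_simps = module_hom.add[OF phi] module_hom.scale[OF phi] module_hom.neg[OF phi]
  have jacobi: "sm (eps c a) ?J1 + sm (eps a b) ?J2 + sm (eps b c) ?J3 = 0"
    using arg_cong[where f=\<phi>, OF hom_jacobi[OF x y z]] by (simp add: phi_simps module_hom.zero[OF phi])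
  have xy_z: "\<phi> (br (br x y) (\<alpha> z)) = - sm (eps a c * eps b c) ?J3"
    using bracket_antisym[OF bracket_grade[OF x y] alpha_grade[OF z]] by (simp add: phi_simps eps_simps)
  have "\<phi> (br (br x z) (\<alpha> y)) = sm (eps a b * eps c b * eps a c) ?J2"
    using bracket_antisym[OF bracket_grade[OF x z] alpha_grade[OF y]] bracket_antisym[OF x z]
    by (simp add: phi_simps eps_simps module_hom.neg[OF bracket_right_hom] module_hom.scale[OF bracket_right_hom])
  then have xz_y: "sm (eps b c) (\<phi> (br (br x z) (\<alpha> y))) = sm (eps a c * eps a b) ?J2"
    using eps_simps(3)[of b c] by (simp add: algebra_simps)
  have "\<phi> (br (br x y) (\<alpha> z)) - sm (eps b c) (\<phi> (br (br x z) (\<alpha> y))) - ?J1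
      = - sm (eps a c) (sm (eps c a) ?J1 + sm (eps a b) ?J2 + sm (eps b c) ?J3)"
    unfolding xy_z xz_y using eps_simps(3)[of a c] by (simp add: algebra_simps M.scale_right_distrib)
  with jacobi show ?thesis by (simp add: algebra_simps)
qed

end

locale color_hom_lie_cochain1 = color_hom_lie_module +
  fixes \<phi> and d
  assumes cochain1: "cochain1_hom sc G \<alpha> sm GM \<beta> \<phi> d"
begin

lemma phi_hom: "module_hom sc sm \<phi>"
  and phi_alpha: "\<phi> (\<alpha> x) = \<beta> (\<phi> x)"
  using cochain1 unfolding cochain1_hom_def linear_iff_module_hom by blast+

lemma delta1_homogeneous:
  assumes "y0 \<in> G a0" and "y1 \<in> G a1"
  shows "delta1 G br eps sm \<rho> \<phi> d y0 y1 =
     sm (eps d a0) (\<rho> y0 (\<phi> y1)) - sm (eps (d + a0) a1) (\<rho> y1 (\<phi> y0)) - \<phi> (br y0 y1)"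
  using module_hom.zero[OF rho_left_hom] module_hom.zero[OF rho_right_hom]
    module_hom.zero[OF bracket_left_hom] module_hom.zero[OF bracket_right_hom]
    module_hom.zero[OF phi_hom] module.scale_zero_right[OF module_sm]
  unfolding delta1_def supp_homogeneous[OF graded assms(1)] supp_homogeneous[OF graded assms(2)]
    comp_homogeneous[OF graded assms(1)] comp_homogeneous[OF graded assms(2)]
  by simp

abbreviation delta1_phi where
  "delta1_phi \<equiv> delta1 G br eps sm \<rho> \<phi> d"

lemma delta2_delta1_homogeneous:
  assumes x: "x \<in> G a" and y: "y \<in> G b" and z: "z \<in> G c"
  shows "sm (eps d a) (\<rho> (\<alpha> x) (delta1_phi y z)) - sm (eps (d + a) b) (\<rho> (\<alpha> y) (delta1_phi x z))
      + sm (eps (d + a + b) c) (\<rho> (\<alpha> z) (delta1_phi x y)) - delta1_phi (br x y) (\<alpha> z)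
      + sm (eps b c) (delta1_phi (br x z) (\<alpha> y)) + delta1_phi (\<alpha> x) (br y z) = 0"
proof -
  interpret M: module sm by (rule module_sm)
  show ?thesis
    unfolding delta1_homogeneous[OF y z] delta1_homogeneous[OF x z] delta1_homogeneous[OF x y]
      delta1_homogeneous[OF bracket_grade[OF x y] alpha_grade[OF z]]
      delta1_homogeneous[OF bracket_grade[OF x z] alpha_grade[OF y]]
      delta1_homogeneous[OF alpha_grade[OF x] bracket_grade[OF y z]]
    by (simp add: rho_simps M.scale_right_diff_distrib phi_alpha rho_bracket[OF x y] rho_bracket[OF x z]
        rho_bracket[OF y z] phi_hom_jacobi[OF phi_hom x y z] eps_simps algebra_simps)
qed

lemma delta2_delta1_eq_0: "delta2 G br \<alpha> eps sm \<rho> delta1_phi d x0 x1 x2 = 0"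
  unfolding delta2_def Let_def
  by (intro sum.neutral ballI delta2_delta1_homogeneous comp_in_grade[OF graded])

end

theorem mainTheorem9:
  fixes sc :: "'k::field_char_0 \<Rightarrow> 'v::ab_group_add \<Rightarrow> 'v"
    and G :: "'g::ab_group_add \<Rightarrow> 'v set"
    and br :: "'v \<Rightarrow> 'v \<Rightarrow> 'v" and \<alpha> :: "'v \<Rightarrow> 'v"
    and eps :: "'g \<Rightarrow> 'g \<Rightarrow> 'k"
    and sm :: "'k \<Rightarrow> 'm::ab_group_add \<Rightarrow> 'm" and GM :: "'g \<Rightarrow> 'm set"
    and \<beta> :: "'m \<Rightarrow> 'm" and \<rho> :: "'v \<Rightarrow> 'm \<Rightarrow> 'm"
    and \<phi> :: "'v \<Rightarrow> 'm" and d :: 'g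
  assumes "color_hom_lie sc G br \<alpha> eps"
    and "representation sc G br \<alpha> eps sm GM \<beta> \<rho>"
    and "cochain1_hom sc G \<alpha> sm GM \<beta> \<phi> d"
  shows "delta2 G br \<alpha> eps sm \<rho> (delta1 G br eps sm \<rho> \<phi> d) d x0 x1 x2 = 0"
proof -
  interpret color_hom_lie_cochain1 sc G br \<alpha> eps sm GM \<beta> \<rho> \<phi> d
    using assms by unfold_locales
  show ?thesis by (rule delta2_delta1_eq_0)
qed

end
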